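(* Let $N,k\ge1$ be integers and let $\varepsilon>0$, $A>0$, $c>0$. For $z=(x,y)\in\mathbb{R}^N\times\mathbb{R}^k$ set $\Theta(z)=c\,e^{-\varepsilon\sqrt{A+|x|^4+|y|^2}}$. Then $$\Delta_{\mathcal{G}}\Theta(z)\ge-\varepsilon\,[2(N+2)+k]\,\Theta(z)\qquad\text{for all } z\in\mathbb{R}^{N+k},$$ where $\Delta_{\mathcal{G}}=\Delta_x+|x|^2\Delta_y$.
   Context: $\Delta_x$ and $\Delta_y$ denote the Euclidean Laplacians in $x\in\mathbb{R}^N$ and $y\in\mathbb{R}^k$. *)

theory Defs
  imports "HOL-Analysis.Analysis"
begin

definition second_dir_deriv :: "('a::real_normed_vector \<Rightarrow> real) \<Rightarrow> 'a \<Rightarrow> 'a \<Rightarrow> real" where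
  "second_dir_deriv f v p = deriv (deriv (\<lambda>t. f (p + t *\<^sub>R v))) 0"

definition laplacian :: "(real^'n \<Rightarrow> real) \<Rightarrow> real^'n \<Rightarrow> real" where
  "laplacian f p = (\<Sum>i\<in>UNIV. second_dir_deriv f (axis i 1) p)"

definition grushin_laplacian :: "(real^'n \<Rightarrow> real^'k \<Rightarrow> real) \<Rightarrow> real^'n \<Rightarrow> real^'k \<Rightarrow> real" where
  "grushin_laplacian u x y =
     laplacian (\<lambda>x'. u x' y) x + (norm x)^2 * laplacian (\<lambda>y'. u x y') y"

end

theory Submission
  imports Defs
begin

text \<open>Along any line, \<Theta> has the form F = c exp(-\<epsilon> sqrt G) with G > 0, and
  F'' = F (\<epsilon> G'/(2 sqrt G))^2 + \<epsilon> F G'^2/(4 G sqrt G) - \<epsilon> F G''/(2 sqrt G):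
  dropping the two nonnegative terms leaves a bound in terms of G'' alone.
  For G = A + |x|^4 + |y|^2 these G'' sum, over the coordinate directions in x
  and in y, to 4(N+2)|x|^2 and 2k; after the weight |x|^2 in front of the y-Laplacian both
  contributions carry the factor |x|^2 / sqrt G \<le> 1.\<close>

lemma deriv2_exp_neg_sqrt_ge:
  fixes G G' :: "real \<Rightarrow> real"
  assumes G: "\<And>t. (G has_real_derivative G' t) (at t)"
    and G': "(G' has_real_derivative G'') (at t\<^sub>0)"
    and G_pos: "\<And>t. G t > 0" and "e \<ge> 0" and "c \<ge> 0"
  shows "deriv (deriv (\<lambda>t. c * exp (- e * sqrt (G t)))) t\<^sub>0
     \<ge> - e * (c * exp (- e * sqrt (G t\<^sub>0))) * G'' / (2 * sqrt (G t\<^sub>0))"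
proof -
  define F where "F t = c * exp (- e * sqrt (G t))" for t
  define k where "k t = - e * G' t / (2 * sqrt (G t))" for t
  define k' where "k' = - e * (G'' / (2 * sqrt (G t\<^sub>0)) - (G' t\<^sub>0)\<^sup>2 / (4 * G t\<^sub>0 * sqrt (G t\<^sub>0)))"
  have F_deriv: "(F has_real_derivative F t * k t) (at t)" for t
    unfolding F_def k_def using G_pos[of t]
    by (auto intro!: derivative_eq_intros G simp: field_simps)
  have k_deriv: "(k has_real_derivative k') (at t\<^sub>0)"
    unfolding k_def k'_def using G_pos[of t\<^sub>0]
    by (auto intro!: derivative_eq_intros G G' simp: field_simps power2_eq_square)
  have "deriv F = (\<lambda>t. F t * k t)"
    using F_deriv DERIV_imp_deriv by blast
  moreover have "((\<lambda>t. F t * k t) has_real_derivative F t\<^sub>0 * (k t\<^sub>0)\<^sup>2 + F t\<^sub>0 * k') (at t\<^sub>0)"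
    using DERIV_mult[OF F_deriv k_deriv] by (simp add: algebra_simps power2_eq_square)
  ultimately have F_deriv2: "deriv (deriv F) t\<^sub>0 = F t\<^sub>0 * (k t\<^sub>0)\<^sup>2 + F t\<^sub>0 * k'"
    by (simp add: DERIV_imp_deriv)
  have F_nonneg: "F t\<^sub>0 \<ge> 0"
    unfolding F_def using \<open>c \<ge> 0\<close> by simp
  have "e * ((G' t\<^sub>0)\<^sup>2 / (4 * G t\<^sub>0 * sqrt (G t\<^sub>0))) \<ge> 0"
    using G_pos[of t\<^sub>0] \<open>e \<ge> 0\<close> by simp
  moreover have "k' = - e * G'' / (2 * sqrt (G t\<^sub>0)) + e * ((G' t\<^sub>0)\<^sup>2 / (4 * G t\<^sub>0 * sqrt (G t\<^sub>0)))"
    unfolding k'_def by (simp add: algebra_simps)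
  ultimately have "k' \<ge> - e * G'' / (2 * sqrt (G t\<^sub>0))"
    by linarith
  then have "F t\<^sub>0 * k' \<ge> F t\<^sub>0 * (- e * G'' / (2 * sqrt (G t\<^sub>0)))"
    using F_nonneg by (rule mult_left_mono)
  moreover have "F t\<^sub>0 * (k t\<^sub>0)\<^sup>2 \<ge> 0"
    using F_nonneg by simp
  ultimately have "deriv (deriv F) t\<^sub>0 \<ge> F t\<^sub>0 * (- e * G'' / (2 * sqrt (G t\<^sub>0)))"
    using F_deriv2 by linarith
  then show ?thesis
    unfolding F_def[symmetric] by (simp add: mult_ac)
qed

lemma norm_add_scaleR_axis_power2:
  fixes x :: "real^'n"
  shows "(norm (x + t *\<^sub>R axis i 1))\<^sup>2 = (norm x)\<^sup>2 + 2 * t * x $ i + t\<^sup>2"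
  unfolding power2_norm_eq_inner
  by (simp add: inner_add_left inner_add_right inner_axis inner_axis_axis inner_commute
      algebra_simps power2_eq_square)

lemma sum_vec_nth_power2:
  fixes x :: "real^'n"
  shows "(\<Sum>i\<in>UNIV. (x $ i)\<^sup>2) = (norm x)\<^sup>2"
  unfolding power2_norm_eq_inner inner_vec_def by (simp add: power2_eq_square)

lemma second_dir_deriv_exp_neg_sqrt_quartic_ge:
  fixes x :: "real^'n"
  assumes "e \<ge> 0" and "c \<ge> 0" and "a > 0"
  shows "second_dir_deriv (\<lambda>x'. c * exp (- e * sqrt (a + (norm x')^4))) (axis i 1) x
     \<ge> - e * (c * exp (- e * sqrt (a + (norm x)^4))) * (8 * (x $ i)\<^sup>2 + 4 * (norm x)\<^sup>2)
          / (2 * sqrt (a + (norm x)^4))"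
proof -
  define r where "r t = (norm x)\<^sup>2 + 2 * t * x $ i + t\<^sup>2" for t :: real
  define G where "G t = a + (r t)\<^sup>2" for t
  define G' where "G' t = 2 * r t * (2 * x $ i + 2 * t)" for t
  have line: "(\<lambda>t. c * exp (- e * sqrt (a + (norm (x + t *\<^sub>R axis i 1))^4)))
      = (\<lambda>t. c * exp (- e * sqrt (G t)))"
  proof
    fix t
    have "(norm (x + t *\<^sub>R axis i 1))^4 = (r t)\<^sup>2"
      unfolding r_def norm_add_scaleR_axis_power2[symmetric] by simp
    then show "c * exp (- e * sqrt (a + (norm (x + t *\<^sub>R axis i 1))^4)) = c * exp (- e * sqrt (G t))"
      unfolding G_def by simp
  qed
  have "(G has_real_derivative G' t) (at t)" for t
    unfolding G_def G'_def r_def by (auto intro!: derivative_eq_intros simp: algebra_simps)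
  moreover have "(G' has_real_derivative 8 * (x $ i)\<^sup>2 + 4 * (norm x)\<^sup>2) (at 0)"
    unfolding G'_def r_def
    by (auto intro!: derivative_eq_intros simp: algebra_simps power2_eq_square)
  moreover have "G t > 0" for t
    unfolding G_def using \<open>a > 0\<close> by (simp add: add_pos_nonneg)
  ultimately have "deriv (deriv (\<lambda>t. c * exp (- e * sqrt (G t)))) 0
      \<ge> - e * (c * exp (- e * sqrt (G 0))) * (8 * (x $ i)\<^sup>2 + 4 * (norm x)\<^sup>2) / (2 * sqrt (G 0))"
    using assms by (intro deriv2_exp_neg_sqrt_ge)
  moreover have "G 0 = a + (norm x)^4"
    unfolding G_def r_def by (simp add: power2_eq_square power4_eq_xxxx)
  ultimately show ?thesis
    unfolding second_dir_deriv_def line by simp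
qed

lemma laplacian_exp_neg_sqrt_quartic_ge:
  fixes x :: "real^'n"
  assumes "e \<ge> 0" and "c \<ge> 0" and "a > 0"
  shows "laplacian (\<lambda>x'. c * exp (- e * sqrt (a + (norm x')^4))) x
     \<ge> - e * (c * exp (- e * sqrt (a + (norm x)^4))) * (2 * (real CARD('n) + 2))
          * (norm x)\<^sup>2 / sqrt (a + (norm x)^4)"
proof -
  define K where "K = - e * (c * exp (- e * sqrt (a + (norm x)^4))) / (2 * sqrt (a + (norm x)^4))"
  have "laplacian (\<lambda>x'. c * exp (- e * sqrt (a + (norm x')^4))) x
      \<ge> (\<Sum>i\<in>UNIV. K * (8 * (x $ i)\<^sup>2 + 4 * (norm x)\<^sup>2))"
    unfolding laplacian_def K_def
    using second_dir_deriv_exp_neg_sqrt_quartic_ge[OF assms]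
    by (intro sum_mono) (simp add: mult.commute mult.left_commute)
  also have "(\<Sum>i\<in>UNIV. K * (8 * (x $ i)\<^sup>2 + 4 * (norm x)\<^sup>2))
      = K * (8 * (norm x)\<^sup>2 + 4 * (norm x)\<^sup>2 * real CARD('n))"
    by (simp add: sum.distrib sum_distrib_left[symmetric] sum_vec_nth_power2)
  also have "\<dots> = - e * (c * exp (- e * sqrt (a + (norm x)^4))) * (2 * (real CARD('n) + 2))
          * (norm x)\<^sup>2 / sqrt (a + (norm x)^4)"
  proof -
    have "sqrt (a + (norm x)^4) > 0"
      using \<open>a > 0\<close> by (simp add: add_pos_nonneg)
    then show ?thesis
      unfolding K_def by (simp add: field_simps)
  qed
  finally show ?thesis .
qed

lemma laplacian_exp_neg_sqrt_quadratic_ge: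
  fixes y :: "real^'k"
  assumes "e \<ge> 0" and "c \<ge> 0" and "a > 0"
  shows "laplacian (\<lambda>y'. c * exp (- e * sqrt (a + (norm y')\<^sup>2))) y
     \<ge> - e * (c * exp (- e * sqrt (a + (norm y)\<^sup>2))) * real CARD('k) / sqrt (a + (norm y)\<^sup>2)"
proof -
  have "second_dir_deriv (\<lambda>y'. c * exp (- e * sqrt (a + (norm y')\<^sup>2))) (axis i 1) y
      \<ge> - e * (c * exp (- e * sqrt (a + (norm y)\<^sup>2))) / sqrt (a + (norm y)\<^sup>2)" for i
  proof -
    define G where "G t = a + ((norm y)\<^sup>2 + 2 * t * y $ i + t\<^sup>2)" for t :: real
    have "(G has_real_derivative 2 * y $ i + 2 * t) (at t)" for t
      unfolding G_def by (auto intro!: derivative_eq_intros)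
    moreover have "((\<lambda>t. 2 * y $ i + 2 * t) has_real_derivative 2) (at 0)"
      by (auto intro!: derivative_eq_intros)
    moreover have "G t > 0" for t
      unfolding G_def norm_add_scaleR_axis_power2[symmetric] using \<open>a > 0\<close>
      by (simp add: add_pos_nonneg)
    ultimately have "deriv (deriv (\<lambda>t. c * exp (- e * sqrt (G t)))) 0
        \<ge> - e * (c * exp (- e * sqrt (G 0))) * 2 / (2 * sqrt (G 0))"
      using assms by (intro deriv2_exp_neg_sqrt_ge)
    then show ?thesis
      unfolding second_dir_deriv_def G_def norm_add_scaleR_axis_power2 by simp
  qed
  then have "laplacian (\<lambda>y'. c * exp (- e * sqrt (a + (norm y')\<^sup>2))) y
      \<ge> (\<Sum>i\<in>(UNIV::'k set). - e * (c * exp (- e * sqrt (a + (norm y)\<^sup>2))) / sqrt (a + (norm y)\<^sup>2))"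
    unfolding laplacian_def by (intro sum_mono)
  then show ?thesis
    by (simp add: mult.commute)
qed

theorem lemma4:
  fixes \<epsilon> A c :: real and x :: "real^'n" and y :: "real^'k"
  assumes "\<epsilon> > 0" and "A > 0" and "c > 0"
  defines "\<Theta> \<equiv> (\<lambda>(x'::real^'n) (y'::real^'k).
              c * exp (- \<epsilon> * sqrt (A + (norm x')^4 + (norm y')^2)))"
  shows "grushin_laplacian \<Theta> x y
           \<ge> - \<epsilon> * (2 * (real CARD('n) + 2) + real CARD('k)) * \<Theta> x y"
proof -
  define h where "h = sqrt (A + (norm x)^4 + (norm y)\<^sup>2)"
  define C where "C = \<epsilon> * \<Theta> x y"
  have "(\<lambda>x'. \<Theta> x' y) = (\<lambda>x'. c * exp (- \<epsilon> * sqrt ((A + (norm y)\<^sup>2) + (norm x')^4)))"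
    unfolding \<Theta>_def by (simp add: add_ac)
  then have \<Delta>\<^sub>x: "laplacian (\<lambda>x'. \<Theta> x' y) x \<ge> - C * (2 * (real CARD('n) + 2)) * (norm x)\<^sup>2 / h"
    using laplacian_exp_neg_sqrt_quartic_ge[of \<epsilon> c "A + (norm y)\<^sup>2" x] assms
    unfolding C_def h_def \<Theta>_def by (simp add: add_ac add_pos_nonneg)
  have \<Delta>\<^sub>y: "laplacian (\<lambda>y'. \<Theta> x y') y \<ge> - C * real CARD('k) / h"
    using laplacian_exp_neg_sqrt_quadratic_ge[of \<epsilon> c "A + (norm x)^4" y] assms
    unfolding C_def h_def \<Theta>_def by (simp add: add_pos_nonneg)
  have "h > 0" and "(norm x)\<^sup>2 \<le> h"
    unfolding h_def using \<open>A > 0\<close> by (simp_all add: add_pos_nonneg real_le_rsqrt power_even_eq)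
  have "C \<ge> 0"
    unfolding C_def \<Theta>_def using assms by simp
  have "- C * (2 * (real CARD('n) + 2) + real CARD('k))
      \<le> - C * (2 * (real CARD('n) + 2) + real CARD('k)) * ((norm x)\<^sup>2 / h)"
    using mult_left_le[of "(norm x)\<^sup>2 / h" "C * (2 * (real CARD('n) + 2) + real CARD('k))"]
      \<open>h > 0\<close> \<open>(norm x)\<^sup>2 \<le> h\<close> \<open>C \<ge> 0\<close> by simp
  also have "\<dots> = - C * (2 * (real CARD('n) + 2)) * (norm x)\<^sup>2 / h + (norm x)\<^sup>2 * (- C * real CARD('k) / h)"
    using \<open>h > 0\<close> by (simp add: field_simps)
  also have "\<dots> \<le> grushin_laplacian \<Theta> x y"
    using \<Delta>\<^sub>x mult_left_mono[OF \<Delta>\<^sub>y zero_le_power2[of "norm x"]] unfolding grushin_laplacian_def by linarith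
  finally show ?thesis
    unfolding C_def by (simp add: mult_ac)
qed

end
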